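(* Let $n\in\mathbb{N}$, $a<b$, and let $f:[a,b]\to\mathbb{R}$ be $2n$-convex. If $x_1=a$ and $x_2,\dots,x_{n+1}\in(a,b)$, then there exists a polynomial $p\in\Pi_{2n}$ such that $p(x_i)=f(x_i)$ for $i=1,\dots,n+1$ and $p(x)\le f(x)$ for all $x\in[a,b]$.
   Context: $\Pi_m$ denotes the set of real polynomials of degree at most $m$. Divided differences are defined recursively by $[x_1;f]:=f(x_1)$ and $[x_1,\dots,x_{m+1};f]:=\frac{[x_2,\dots,x_{m+1};f]-[x_1,\dots,x_m;f]}{x_{m+1}-x_1}$ for pairwise distinct points. For $m\in\mathbb{N}$, a function $f$ on an interval $I$ is called $m$-convex if $[x_1,\dots,x_{m+2};f]\ge 0$ for all pairwise distinct $x_1,\dots,x_{m+2}\in I$. *)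

theory Defs
  imports "HOL-Analysis.Analysis" "HOL-Computational_Algebra.Polynomial"
begin

fun divdiff :: "real list \<Rightarrow> (real \<Rightarrow> real) \<Rightarrow> real" where
  "divdiff [] f = 0"
| "divdiff [x] f = f x"
| "divdiff (x # y # ys) f =
     (divdiff (y # ys) f - divdiff (butlast (x # y # ys)) f) / (last (y # ys) - x)"

definition m_convex :: "nat \<Rightarrow> real set \<Rightarrow> (real \<Rightarrow> real) \<Rightarrow> bool" where
  "m_convex m I f \<longleftrightarrow>
     (\<forall>xs. length xs = m + 2 \<longrightarrow> distinct xs \<longrightarrow> set xs \<subseteq> I \<longrightarrow> divdiff xs f \<ge> 0)"

end

theory Submission
  imports Defs
begin

text \<open>
  Pad the interior points to n distinct points y, and interpolate f by the Lagrange polynomial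
  P_e at the 2n+1 nodes a, y, y + e. Its remainder is
  f t - P_e t = [t, nodes; f] \<cdot> \<Prod>(t - v): the divided difference is nonnegative by
  2n-convexity, and the nodal product is nonnegative for t \<in> [a,b] outside the gaps (y, y + e).
  So P_e \<le> f away from shrinking gaps, and a limit of the P_e as e \<rightarrow> 0 is the required
  minorant. The limit exists because the coefficients of P_e stay bounded: otherwise a
  normalised limit would be a nonzero polynomial of degree \<le> 2n which is \<le> 0 on [a,b] and
  vanishes at a and at the n interior points y, where it is maximal and so vanishes to
  order two -- more than 2n roots.
\<close>

definition nodal_weight :: "real set \<Rightarrow> real \<Rightarrow> real" where
  "nodal_weight S u = (\<Prod>v\<in>S-{u}. u - v)"

text \<open>The symmetric form of the divided difference at the points of S, which does not depend on
  an ordering of the nodes.\<close>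
definition divided_diff_set :: "(real \<Rightarrow> real) \<Rightarrow> real set \<Rightarrow> real" where
  "divided_diff_set f S = (\<Sum>u\<in>S. f u / nodal_weight S u)"

lemma nodal_weight_nonzero: "finite S \<Longrightarrow> nodal_weight S u \<noteq> 0"
  unfolding nodal_weight_def by (auto simp: prod_zero_iff)

lemma nodal_weight_insert:
  "finite S \<Longrightarrow> z \<notin> S \<Longrightarrow> u \<in> S \<Longrightarrow> nodal_weight (insert z S) u = (u - z) * nodal_weight S u"
  unfolding nodal_weight_def by (auto simp: insert_Diff_if)

lemma nodal_weight_insert_self:
  "z \<notin> S \<Longrightarrow> nodal_weight (insert z S) z = (\<Prod>v\<in>S. z - v)"
  unfolding nodal_weight_def by simp

lemma divided_diff_set_insert:
  assumes "finite S" "z \<notin> S"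
  shows "divided_diff_set f (insert z S) =
           f z / (\<Prod>v\<in>S. z - v) + (\<Sum>u\<in>S. f u / ((u - z) * nodal_weight S u))"
  using assms unfolding divided_diff_set_def
  by (simp add: nodal_weight_insert_self nodal_weight_insert cong: sum.cong)

lemma divided_diff_set_recurrence:
  assumes C: "finite C" "x \<notin> C" "l \<notin> C" "x \<noteq> l"
  shows "(divided_diff_set f (insert l C) - divided_diff_set f (insert x C)) / (l - x)
           = divided_diff_set f (insert x (insert l C))"
proof -
  define Px Pl where "Px = (\<Prod>v\<in>C. x - v)" and "Pl = (\<Prod>v\<in>C. l - v)"
  define w where "w = nodal_weight C"
  define Sl Sx S where
    "Sl = (\<Sum>u\<in>C. f u / ((u - l) * w u))" and "Sx = (\<Sum>u\<in>C. f u / ((u - x) * w u))"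
    and "S = (\<Sum>u\<in>C. f u / ((u - x) * ((u - l) * w u)))"
  have "Px \<noteq> 0" "Pl \<noteq> 0" "x - l \<noteq> 0" "l - x \<noteq> 0"
    using C by (auto simp: Px_def Pl_def prod_zero_iff)
  have "Sl - Sx = (l - x) * S"
    unfolding Sl_def Sx_def S_def sum_subtractf[symmetric] sum_distrib_left
  proof (intro sum.cong refl)
    fix u assume "u \<in> C"
    then have "u - x \<noteq> 0" "u - l \<noteq> 0" "w u \<noteq> 0"
      using C by (auto simp: w_def nodal_weight_nonzero)
    then show "f u / ((u - l) * w u) - f u / ((u - x) * w u)
        = (l - x) * (f u / ((u - x) * ((u - l) * w u)))"
      by (simp add: divide_simps) (simp add: algebra_simps)
  qed
  then have Sl: "Sl = Sx + (l - x) * S"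
    by simp
  have xl: "divided_diff_set f (insert x (insert l C))
      = f x / ((x - l) * Px) + (f l / ((l - x) * Pl) + S)"
    using C by (simp add: divided_diff_set_insert nodal_weight_insert nodal_weight_insert_self
        Px_def Pl_def w_def S_def)
  have l: "divided_diff_set f (insert l C) = f l / Pl + Sl"
    and x: "divided_diff_set f (insert x C) = f x / Px + Sx"
    using C by (simp_all add: divided_diff_set_insert Px_def Pl_def w_def Sl_def Sx_def)
  show ?thesis
    unfolding xl l x Sl using \<open>Px \<noteq> 0\<close> \<open>Pl \<noteq> 0\<close> \<open>x - l \<noteq> 0\<close> \<open>l - x \<noteq> 0\<close>
    by (simp add: divide_simps) (simp add: algebra_simps)
qed

lemma divdiff_eq_divided_diff_set:
  "distinct xs \<Longrightarrow> xs \<noteq> [] \<Longrightarrow> divdiff xs f = divided_diff_set f (set xs)"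
proof (induction xs f rule: divdiff.induct)
  case (2 x f)
  then show ?case
    by (simp add: divided_diff_set_def nodal_weight_def)
next
  case (3 x y ys f)
  define l C where "l = last (y # ys)" and "C = set (butlast (y # ys))"
  have split: "y # ys = butlast (y # ys) @ [l]"
    unfolding l_def by simp
  have set_eq: "set (y # ys) = insert l C"
    unfolding C_def by (subst split) simp
  have "distinct (butlast (y # ys) @ [l])"
    using "3.prems"(1) by (subst split[symmetric]) simp
  then have "l \<notin> C"
    unfolding C_def by simp
  have "x \<notin> insert l C"
    using "3.prems"(1) unfolding set_eq[symmetric] by simp
  have "divdiff (y # ys) f = divided_diff_set f (insert l C)"
    using "3.IH"(1) "3.prems"(1) unfolding set_eq[symmetric] by simp
  moreover have "divdiff (butlast (x # y # ys)) f = divided_diff_set f (insert x C)"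
    using "3.IH"(2) distinct_butlast[OF "3.prems"(1)] by (simp add: C_def)
  ultimately have "divdiff (x # y # ys) f
      = (divided_diff_set f (insert l C) - divided_diff_set f (insert x C)) / (l - x)"
    by (simp only: divdiff.simps(3) l_def)
  also have "\<dots> = divided_diff_set f (insert x (insert l C))"
    using \<open>l \<notin> C\<close> \<open>x \<notin> insert l C\<close> by (intro divided_diff_set_recurrence) (auto simp: C_def)
  also have "insert x (insert l C) = set (x # y # ys)"
    using set_eq by simp
  finally show ?case .
qed simp

lemma m_convex_divided_diff_set_nonneg:
  assumes "m_convex m I f" "finite S" "card S = m + 2" "S \<subseteq> I"
  shows "0 \<le> divided_diff_set f S"
proof -
  let ?xs = "sorted_list_of_set S"
  have "0 \<le> divdiff ?xs f"
    using assms unfolding m_convex_def by auto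
  moreover have "?xs \<noteq> []"
    using assms by auto
  ultimately show ?thesis
    using divdiff_eq_divided_diff_set[of ?xs f] assms by simp
qed

definition lagrange_interp :: "real set \<Rightarrow> (real \<Rightarrow> real) \<Rightarrow> real poly" where
  "lagrange_interp Z f = (\<Sum>u\<in>Z. smult (f u / nodal_weight Z u) (\<Prod>v\<in>Z-{u}. [:-v, 1:]))"

lemma poly_lagrange_interp:
  "poly (lagrange_interp Z f) t = (\<Sum>u\<in>Z. f u / nodal_weight Z u * (\<Prod>v\<in>Z-{u}. t - v))"
  by (simp add: lagrange_interp_def poly_sum poly_prod)

lemma degree_lagrange_interp:
  assumes "finite Z"
  shows "degree (lagrange_interp Z f) \<le> card Z - 1"
  unfolding lagrange_interp_def
proof (rule degree_sum_le[OF assms])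
  fix u assume "u \<in> Z"
  have "degree (\<Prod>v\<in>Z-{u}. [:-v, 1:]) \<le> (\<Sum>v\<in>Z-{u}. degree [:-v, 1:])"
    using degree_prod_sum_le[of "Z-{u}" "\<lambda>v. [:-v, 1:]"] assms by (simp add: o_def)
  also have "\<dots> = card Z - 1"
    using \<open>u \<in> Z\<close> assms by simp
  finally show "degree (smult (f u / nodal_weight Z u) (\<Prod>v\<in>Z-{u}. [:-v, 1:])) \<le> card Z - 1"
    using degree_smult_le order_trans by blast
qed

lemma poly_lagrange_interp_node:
  assumes "finite Z" "z \<in> Z"
  shows "poly (lagrange_interp Z f) z = f z"
proof -
  have "(\<Sum>u\<in>Z-{z}. f u / nodal_weight Z u * (\<Prod>v\<in>Z-{u}. z - v)) = 0"
    using assms by (intro sum.neutral) (auto simp: prod_zero_iff)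
  then have "poly (lagrange_interp Z f) z = f z / nodal_weight Z z * (\<Prod>v\<in>Z-{z}. z - v)"
    unfolding poly_lagrange_interp using assms by (simp add: sum.remove)
  then show ?thesis
    using nodal_weight_nonzero[OF assms(1), of z] by (simp add: nodal_weight_def)
qed

lemma lagrange_interp_remainder:
  assumes "finite Z" "t \<notin> Z"
  shows "f t - poly (lagrange_interp Z f) t = divided_diff_set f (insert t Z) * (\<Prod>v\<in>Z. t - v)"
proof -
  define P where "P = (\<Prod>v\<in>Z. t - v)"
  have "P \<noteq> 0"
    using assms by (auto simp: P_def prod_zero_iff)
  have "f u / ((u - t) * nodal_weight Z u) * P = - (f u / nodal_weight Z u * (\<Prod>v\<in>Z-{u}. t - v))"
    if "u \<in> Z" for u
  proof -
    have "P = (t - u) * (\<Prod>v\<in>Z-{u}. t - v)"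
      unfolding P_def using assms that by (simp add: prod.remove)
    moreover have "u - t \<noteq> 0" "nodal_weight Z u \<noteq> 0"
      using assms that nodal_weight_nonzero by auto
    ultimately show ?thesis
      by (simp add: divide_simps) (simp add: algebra_simps)
  qed
  then have "divided_diff_set f (insert t Z) * P = f t - poly (lagrange_interp Z f) t"
    using assms \<open>P \<noteq> 0\<close>
    by (simp add: divided_diff_set_insert poly_lagrange_interp distrib_right sum_distrib_right
        sum_negf P_def[symmetric])
  then show ?thesis
    by (simp add: P_def)
qed

lemma lagrange_interp_le_if_nodal_prod_nonneg:
  assumes "m_convex m I f" "finite Z" "card Z = m + 1" "Z \<subseteq> I" "t \<in> I"
    and "0 \<le> (\<Prod>v\<in>Z. t - v)"
  shows "poly (lagrange_interp Z f) t \<le> f t"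
proof (cases "t \<in> Z")
  case True
  then show ?thesis
    using assms(2) by (simp add: poly_lagrange_interp_node)
next
  case False
  then have "0 \<le> divided_diff_set f (insert t Z)"
    using assms by (intro m_convex_divided_diff_set_nonneg) auto
  with assms(6) have "0 \<le> f t - poly (lagrange_interp Z f) t"
    by (simp add: lagrange_interp_remainder[OF assms(2) False])
  then show ?thesis
    by simp
qed

lemma bounded_coordinates_convergent_subseq:
  fixes c :: "nat \<Rightarrow> nat \<Rightarrow> real"
  assumes "\<And>k i. \<bar>c k i\<bar> \<le> B"
  shows "\<exists>r l. strict_mono r \<and> (\<forall>i<m. (\<lambda>k. c (r k) i) \<longlonglongrightarrow> l i)"
proof (induction m)
  case 0
  have "strict_mono (id :: nat \<Rightarrow> nat)"
    by (simp add: strict_mono_def)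
  then show ?case
    by blast
next
  case (Suc m)
  then obtain r l where r: "strict_mono r" "\<forall>i<m. (\<lambda>k. c (r k) i) \<longlonglongrightarrow> l i"
    by blast
  have "bounded (range (\<lambda>k. c (r k) m))"
    unfolding bounded_iff using assms by auto
  then obtain l' s where s: "strict_mono s" "((\<lambda>k. c (r k) m) \<circ> s) \<longlonglongrightarrow> l'"
    using bounded_imp_convergent_subsequence by blast
  have "(\<lambda>k. c ((r \<circ> s) k) i) \<longlonglongrightarrow> (l(m := l')) i" if "i < Suc m" for i
  proof (cases "i = m")
    case True
    then show ?thesis
      using s(2) by (simp add: o_def)
  next
    case False
    then have "((\<lambda>k. c (r k) i) \<circ> s) \<longlonglongrightarrow> l i"
      using that False r(2) by (intro LIMSEQ_subseq_LIMSEQ[OF _ s(1)]) simp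
    then show ?thesis
      using False by (simp add: o_def)
  qed
  moreover have "strict_mono (r \<circ> s)"
    using r(1) s(1) by (rule strict_mono_o)
  ultimately show ?case
    by blast
qed

lemma bounded_coeffs_poly_convergent_subseq:
  fixes P :: "nat \<Rightarrow> real poly"
  assumes "\<And>k. degree (P k) \<le> N" "\<And>k i. \<bar>coeff (P k) i\<bar> \<le> B"
  shows "\<exists>r Q. strict_mono r \<and> degree Q \<le> N \<and>
           (\<forall>i. (\<lambda>k. coeff (P (r k)) i) \<longlonglongrightarrow> coeff Q i) \<and>
           (\<forall>t. (\<lambda>k. poly (P (r k)) t) \<longlonglongrightarrow> poly Q t)"
proof -
  obtain r l where r: "strict_mono r" "\<forall>i<Suc N. (\<lambda>k. coeff (P (r k)) i) \<longlonglongrightarrow> l i"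
    using bounded_coordinates_convergent_subseq[of "\<lambda>k i. coeff (P k) i", OF assms(2)] by blast
  define Q where "Q = (\<Sum>i\<le>N. monom (l i) i)"
  have "degree Q \<le> N"
    unfolding Q_def by (intro degree_sum_le) (auto intro: order.trans[OF degree_monom_le])
  have coeffs: "(\<lambda>k. coeff (P (r k)) i) \<longlonglongrightarrow> coeff Q i" for i
  proof (cases "i \<le> N")
    case True
    then show ?thesis
      using r(2) by (simp add: Q_def coeff_sum)
  next
    case False
    then have "coeff (P k) i = 0" "coeff Q i = 0" for k
      using assms(1)[of k] \<open>degree Q \<le> N\<close> by (simp_all add: coeff_eq_0)
    then show ?thesis
      by simp
  qed
  have poly_N: "poly p t = (\<Sum>i\<le>N. coeff p i * t ^ i)" if "degree p \<le> N" for p :: "real poly" and t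
    unfolding poly_altdef using that by (intro sum.mono_neutral_left) (auto simp: coeff_eq_0)
  have "(\<lambda>k. poly (P (r k)) t) \<longlonglongrightarrow> poly Q t" for t
    unfolding poly_N[OF assms(1)] poly_N[OF \<open>degree Q \<le> N\<close>]
    by (intro tendsto_sum tendsto_mult_right coeffs)
  with r(1) \<open>degree Q \<le> N\<close> coeffs show ?thesis
    by blast
qed

lemma poly_seq_rescaled_convergent_subseq:
  fixes P :: "nat \<Rightarrow> real poly"
  assumes deg: "\<And>k. degree (P k) \<le> N"
  shows "\<exists>r s Q c. strict_mono r \<and> (\<forall>k. 0 < s k) \<and> (\<lambda>k. s (r k)) \<longlonglongrightarrow> c \<and>
           degree Q \<le> N \<and> (c = 0 \<longrightarrow> Q \<noteq> 0) \<and>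
           (\<forall>t. (\<lambda>k. s (r k) * poly (P (r k)) t) \<longlonglongrightarrow> poly Q t)"
proof -
  txt \<open>Scale by 1/(1 + M) with M the l1-norm of the coefficients; the limit c of the scale
    factors vanishes only when the coefficients are unbounded, and then the scaled limit Q
    still has coefficient norm 1.\<close>
  define M where "M k = (\<Sum>i\<le>N. \<bar>coeff (P k) i\<bar>)" for k
  define s where "s k = 1 / (1 + M k)" for k
  define D where "D k = smult (s k) (P k)" for k
  have M_nonneg: "0 \<le> M k" for k
    by (simp add: M_def sum_nonneg)
  have s_pos: "0 < s k" and s_M: "s k * M k + s k = 1" for k
    using M_nonneg[of k] by (simp_all add: s_def field_simps)
  have coeff_le_M: "\<bar>coeff (P k) i\<bar> \<le> M k" for k i
    using deg[of k] M_nonneg[of k] by (cases "i \<le> N") (auto simp: M_def coeff_eq_0 intro: member_le_sum)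
  have "\<bar>coeff (D k) i\<bar> \<le> 1" for k i
  proof -
    have "s k * \<bar>coeff (P k) i\<bar> \<le> s k * M k"
      using coeff_le_M s_pos[of k] by (simp add: mult_left_mono)
    then have "s k * \<bar>coeff (P k) i\<bar> \<le> 1"
      using s_pos[of k] s_M[of k] by linarith
    then show ?thesis
      using s_pos[of k] by (simp add: D_def abs_mult)
  qed
  moreover have "\<And>k. degree (D k) \<le> N"
    using deg by (simp add: D_def)
  moreover have "bounded (range s)"
  proof (rule boundedI)
    fix y assume "y \<in> range s"
    then show "norm y \<le> 1"
      using s_pos M_nonneg by (auto simp: s_def)
  qed
  then obtain c r0 where r0: "strict_mono r0" "(s \<circ> r0) \<longlonglongrightarrow> c"
    using bounded_imp_convergent_subsequence by blast
  ultimately obtain r1 Q where r1: "strict_mono r1" "degree Q \<le> N"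
      "\<forall>i. (\<lambda>k. coeff (D (r0 (r1 k))) i) \<longlonglongrightarrow> coeff Q i"
      "\<forall>t. (\<lambda>k. poly (D (r0 (r1 k))) t) \<longlonglongrightarrow> poly Q t"
    using bounded_coeffs_poly_convergent_subseq[of "\<lambda>k. D (r0 k)" N 1] by blast
  define r where "r = r0 \<circ> r1"
  have "strict_mono r"
    unfolding r_def using r0(1) r1(1) by (rule strict_mono_o)
  moreover have c: "(\<lambda>k. s (r k)) \<longlonglongrightarrow> c"
    using LIMSEQ_subseq_LIMSEQ[OF r0(2) r1(1)] by (simp add: r_def o_def)
  moreover have "Q \<noteq> 0" if "c = 0"
  proof
    assume "Q = 0"
    have "(\<lambda>k. (\<Sum>i\<le>N. \<bar>coeff (D (r k)) i\<bar>) + s (r k)) \<longlonglongrightarrow> (\<Sum>i\<le>N. \<bar>coeff Q i\<bar>) + c"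
      using r1(3) c by (intro tendsto_intros) (simp add: r_def)
    moreover have "(\<Sum>i\<le>N. \<bar>coeff (D k) i\<bar>) + s k = 1" for k
      using s_pos[of k] s_M[of k] by (simp add: D_def M_def abs_mult sum_distrib_left[symmetric])
    ultimately show False
      using \<open>Q = 0\<close> that LIMSEQ_unique[OF tendsto_const] by force
  qed
  moreover have "(\<lambda>k. s (r k) * poly (P (r k)) t) \<longlonglongrightarrow> poly Q t" for t
    using r1(4) by (simp add: r_def D_def)
  ultimately show ?thesis
    using s_pos r1(2) by blast
qed

lemma interpolating_minorants_scaled_limit:
  fixes P :: "nat \<Rightarrow> real poly"
  assumes deg: "\<And>k. degree (P k) \<le> N"
    and interp: "\<And>k z. z \<in> Z \<Longrightarrow> poly (P k) z = f z"
    and below: "\<And>t. t \<in> T \<Longrightarrow> eventually (\<lambda>k. poly (P k) t \<le> f t) sequentially"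
  shows "\<exists>Q c. degree Q \<le> N \<and> 0 \<le> c \<and> (c = 0 \<longrightarrow> Q \<noteq> 0) \<and>
           (\<forall>z\<in>Z. poly Q z = c * f z) \<and> (\<forall>t\<in>T. poly Q t \<le> c * f t)"
proof -
  obtain r s Q c where r: "strict_mono r" and s: "\<forall>k. 0 < s k" and c: "(\<lambda>k. s (r k)) \<longlonglongrightarrow> c"
    and Q: "degree Q \<le> N" "c = 0 \<longrightarrow> Q \<noteq> 0"
    and lim: "\<forall>t. (\<lambda>k. s (r k) * poly (P (r k)) t) \<longlonglongrightarrow> poly Q t"
    using poly_seq_rescaled_convergent_subseq[of P N] deg by blast
  have "0 \<le> c"
    using s by (intro tendsto_lowerbound[OF c] always_eventually) (simp_all add: less_imp_le)
  moreover have "poly Q z = c * f z" if "z \<in> Z" for z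
  proof (rule LIMSEQ_unique[OF spec[OF lim, of z]])
    show "(\<lambda>k. s (r k) * poly (P (r k)) z) \<longlonglongrightarrow> c * f z"
      using tendsto_mult_right[OF c, of "f z"] by (simp add: interp[OF that])
  qed
  moreover have "poly Q t \<le> c * f t" if "t \<in> T" for t
  proof (rule tendsto_le[OF trivial_limit_sequentially tendsto_mult_right[OF c] spec[OF lim]])
    show "eventually (\<lambda>k. s (r k) * poly (P (r k)) t \<le> s (r k) * f t) sequentially"
      using eventually_subseq[OF r below[OF that]]
      by (rule eventually_mono) (use s in \<open>auto intro: mult_left_mono less_imp_le\<close>)
  qed
  ultimately show ?thesis
    using Q by blast
qed

lemma interpolating_minorants_limit:
  fixes P :: "nat \<Rightarrow> real poly"
  assumes "\<And>k. degree (P k) \<le> N"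
    and "\<And>k z. z \<in> Z \<Longrightarrow> poly (P k) z = f z"
    and "\<And>t. t \<in> T \<Longrightarrow> eventually (\<lambda>k. poly (P k) t \<le> f t) sequentially"
    and unique: "\<And>q. degree q \<le> N \<Longrightarrow> \<forall>z\<in>Z. poly q z = 0 \<Longrightarrow> \<forall>t\<in>T. poly q t \<le> 0 \<Longrightarrow> q = 0"
  shows "\<exists>q. degree q \<le> N \<and> (\<forall>z\<in>Z. poly q z = f z) \<and> (\<forall>t\<in>T. poly q t \<le> f t)"
proof -
  obtain Q c where Q: "degree Q \<le> N" "0 \<le> c" "c = 0 \<longrightarrow> Q \<noteq> 0"
    "\<forall>z\<in>Z. poly Q z = c * f z" "\<forall>t\<in>T. poly Q t \<le> c * f t"
    using interpolating_minorants_scaled_limit[OF assms(1-3)] by blast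
  have "c \<noteq> 0"
    using Q unique by auto
  then have "degree (smult (1 / c) Q) \<le> N \<and> (\<forall>z\<in>Z. poly (smult (1 / c) Q) z = f z)
      \<and> (\<forall>t\<in>T. poly (smult (1 / c) Q) t \<le> f t)"
    using Q by (auto simp: field_simps)
  then show ?thesis
    by blast
qed

lemma order_ge_2_at_interior_max:
  fixes q :: "real poly"
  assumes "q \<noteq> 0" "y \<in> {a<..<b}" "poly q y = 0" "\<forall>t\<in>{a..b}. poly q t \<le> 0"
  shows "2 \<le> order y q"
proof -
  have "poly (pderiv q) y = 0"
  proof (rule DERIV_local_max[OF poly_DERIV])
    show "0 < min (y - a) (b - y)"
      using assms(2) by simp
    show "\<forall>t. \<bar>y - t\<bar> < min (y - a) (b - y) \<longrightarrow> poly q t \<le> poly q y"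
      using assms(3,4) by (auto simp: abs_less_iff)
  qed
  moreover have "pderiv q \<noteq> 0"
  proof
    assume "pderiv q = 0"
    then obtain c where "q = [:c:]"
      using degree_eq_zeroE pderiv_eq_0_iff by metis
    then show False
      using assms(1,3) by simp
  qed
  ultimately have "order y (pderiv q) \<noteq> 0"
    using order_root by blast
  then show ?thesis
    using order_pderiv[OF assms(1,3)] by simp
qed

lemma nonpos_poly_eq_0_if_interior_roots:
  fixes q :: "real poly"
  assumes Y: "finite Y" "Y \<subseteq> {a<..<b}"
    and "degree q \<le> 2 * card Y" "poly q a = 0" "\<forall>y\<in>Y. poly q y = 0"
    and "\<forall>t\<in>{a..b}. poly q t \<le> 0"
  shows "q = 0"
proof (rule ccontr)
  assume "q \<noteq> 0"
  have "a \<notin> Y"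
    using Y(2) by auto
  have "2 * card Y + 1 \<le> (\<Sum>y\<in>Y. order y q) + order a q"
  proof (intro add_mono)
    have "2 \<le> order y q" if "y \<in> Y" for y
      using order_ge_2_at_interior_max[OF \<open>q \<noteq> 0\<close>] that assms by blast
    then show "2 * card Y \<le> (\<Sum>y\<in>Y. order y q)"
      using sum_mono[of Y "\<lambda>_. 2" "\<lambda>y. order y q"] by (simp add: mult.commute)
    show "1 \<le> order a q"
      using assms(4) \<open>q \<noteq> 0\<close> order_root by (metis less_one not_le)
  qed
  also have "\<dots> = (\<Sum>y\<in>insert a Y. order y q)"
    using Y(1) \<open>a \<notin> Y\<close> by simp
  also have "\<dots> \<le> (\<Sum>y | poly q y = 0. order y q)"
    by (rule sum_mono2[OF poly_roots_finite[OF \<open>q \<noteq> 0\<close>]]) (use assms in auto)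
  also have "\<dots> \<le> degree q"
    by (rule sum_order_le_degree[OF \<open>q \<noteq> 0\<close>])
  finally show False
    using assms(3) by simp
qed

lemma lagrange_interp_shifted_nodes_le:
  fixes Y :: "real set"
  assumes Y: "finite Y" "Y \<subseteq> {a<..<b}" and conv: "m_convex (2 * card Y) {a..b} f"
    and e: "0 < e" "\<forall>y\<in>Y. y + e < b" "\<forall>y\<in>Y. \<forall>y'\<in>Y. y < y' \<longrightarrow> e < y' - y"
    and t: "t \<in> {a..b}" "\<forall>y\<in>Y. y < t \<longrightarrow> y + e \<le> t"
  shows "poly (lagrange_interp (insert a (Y \<union> (\<lambda>y. y + e) ` Y)) f) t \<le> f t"
proof (rule lagrange_interp_le_if_nodal_prod_nonneg[OF conv _ _ _ t(1)])
  let ?Y' = "(\<lambda>y. y + e) ` Y"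
  have "y + e \<notin> Y" if "y \<in> Y" for y
  proof
    assume "y + e \<in> Y"
    moreover have "y < y + e"
      using e(1) by simp
    ultimately have "e < (y + e) - y"
      using e(3) that by blast
    then show False
      by simp
  qed
  then have disj: "Y \<inter> ?Y' = {}"
    by auto
  have a_notin: "a \<notin> Y \<union> ?Y'"
    using Y(2) e(1) by auto
  show "card (insert a (Y \<union> ?Y')) = 2 * card Y + 1"
    using Y(1) disj a_notin by (simp add: card_Un_disjoint card_image)
  show "finite (insert a (Y \<union> ?Y'))"
    using Y(1) by simp
  show "insert a (Y \<union> ?Y') \<subseteq> {a..b}"
    using Y(2) e(1,2) t(1) by (auto simp: subset_iff)
  have "0 \<le> (t - y) * (t - (y + e))" if "y \<in> Y" for y
  proof (cases "y < t")
    case True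
    then have "y + e \<le> t"
      using t(2) that by blast
    with e(1) show ?thesis
      by simp
  next
    case False
    with e(1) show ?thesis
      by (simp add: mult_nonpos_nonpos)
  qed
  then have "0 \<le> (t - a) * (\<Prod>y\<in>Y. (t - y) * (t - (y + e)))"
    using t(1) by (simp add: prod_nonneg)
  also have "(\<Prod>y\<in>Y. (t - y) * (t - (y + e))) = (\<Prod>v\<in>Y \<union> ?Y'. t - v)"
    using Y(1) disj by (simp add: prod.union_disjoint prod.reindex prod.distrib)
  also have "(t - a) * (\<Prod>v\<in>Y \<union> ?Y'. t - v) = (\<Prod>v\<in>insert a (Y \<union> ?Y'). t - v)"
    using Y(1) a_notin by simp
  finally show "0 \<le> (\<Prod>v\<in>insert a (Y \<union> ?Y'). t - v)" .
qed

lemma eventually_lagrange_interp_shifted_nodes_le: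
  fixes Y :: "real set" and e :: "nat \<Rightarrow> real"
  assumes Y: "finite Y" "Y \<subseteq> {a<..<b}" and conv: "m_convex (2 * card Y) {a..b} f"
    and e: "\<And>k. 0 < e k" "e \<longlonglongrightarrow> 0" and t: "t \<in> {a..b}"
  shows "eventually (\<lambda>k. poly (lagrange_interp (insert a (Y \<union> (\<lambda>y. y + e k) ` Y)) f) t \<le> f t)
           sequentially"
proof -
  define G where "G = (\<lambda>y. b - y) ` Y \<union> (\<lambda>(y, y'). y' - y) ` {(y, y') \<in> Y \<times> Y. y < y'}
    \<union> (\<lambda>y. t - y) ` {y \<in> Y. y < t}"
  have "finite {(y, y') \<in> Y \<times> Y. y < y'}"
    by (rule finite_subset[of _ "Y \<times> Y"]) (use Y(1) in auto)
  then have "finite G"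
    using Y(1) by (simp add: G_def)
  moreover have "0 < g" if "g \<in> G" for g
    using that Y(2) by (auto simp: G_def)
  ultimately have "eventually (\<lambda>k. \<forall>g\<in>G. e k < g) sequentially"
    by (intro eventually_ball_finite ballI order_tendstoD(2)[OF e(2)])
  then show ?thesis
  proof (rule eventually_mono)
    fix k assume small: "\<forall>g\<in>G. e k < g"
    have "b - y \<in> G" if "y \<in> Y" for y
      using that by (simp add: G_def)
    moreover have "y' - y \<in> G" if "y \<in> Y" "y' \<in> Y" "y < y'" for y y'
      using that unfolding G_def by force
    moreover have "t - y \<in> G" if "y \<in> Y" "y < t" for y
      using that by (simp add: G_def)
    ultimately have "\<forall>y\<in>Y. y + e k < b" "\<forall>y\<in>Y. \<forall>y'\<in>Y. y < y' \<longrightarrow> e k < y' - y"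
      "\<forall>y\<in>Y. y < t \<longrightarrow> y + e k \<le> t"
      using small by (fastforce+)
    then show "poly (lagrange_interp (insert a (Y \<union> (\<lambda>y. y + e k) ` Y)) f) t \<le> f t"
      using lagrange_interp_shifted_nodes_le[OF Y conv e(1)] t by blast
  qed
qed

lemma exists_poly_minorant_interpolating:
  fixes Y :: "real set"
  assumes Y: "finite Y" "Y \<subseteq> {a<..<b}" and conv: "m_convex (2 * card Y) {a..b} f"
  shows "\<exists>p. degree p \<le> 2 * card Y \<and> (\<forall>z\<in>insert a Y. poly p z = f z) \<and>
           (\<forall>t\<in>{a..b}. poly p t \<le> f t)"
proof -
  define e where "e k = inverse (real (Suc k))" for k
  define Z where "Z k = insert a (Y \<union> (\<lambda>y. y + e k) ` Y)" for k
  let ?P = "\<lambda>k. lagrange_interp (Z k) f"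
  have "finite (Z k)" for k
    using Y(1) by (simp add: Z_def)
  have card_Z: "card (Z k) \<le> 2 * card Y + 1" for k
  proof -
    have "card (Z k) \<le> Suc (card (Y \<union> (\<lambda>y. y + e k) ` Y))"
      unfolding Z_def using Y(1) by (simp add: card_insert_if)
    also have "\<dots> \<le> Suc (card Y + card ((\<lambda>y. y + e k) ` Y))"
      using card_Un_le by simp
    also have "\<dots> \<le> 2 * card Y + 1"
      using card_image_le[OF Y(1)] by simp
    finally show ?thesis .
  qed
  have "degree (?P k) \<le> 2 * card Y" for k
    using degree_lagrange_interp[OF \<open>finite (Z k)\<close>, of f] card_Z[of k] by linarith
  moreover have "poly (?P k) z = f z" if "z \<in> insert a Y" for k z
    using that \<open>finite (Z k)\<close> by (intro poly_lagrange_interp_node) (auto simp: Z_def)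
  moreover have "eventually (\<lambda>k. poly (?P k) t \<le> f t) sequentially" if "t \<in> {a..b}" for t
    unfolding Z_def e_def using Y conv that LIMSEQ_inverse_real_of_nat
    by (intro eventually_lagrange_interp_shifted_nodes_le) auto
  moreover have "q = 0"
    if "degree q \<le> 2 * card Y" "\<forall>z\<in>insert a Y. poly q z = 0" "\<forall>t\<in>{a..b}. poly q t \<le> 0" for q
    using nonpos_poly_eq_0_if_interior_roots[OF Y] that by simp
  ultimately show ?thesis
    by (rule interpolating_minorants_limit)
qed

lemma finite_superset_card_eq:
  assumes "infinite S" "finite X" "X \<subseteq> S" "card X \<le> n"
  obtains Y where "X \<subseteq> Y" "Y \<subseteq> S" "finite Y" "card Y = n"
proof -
  obtain F where "F \<subseteq> S - X" "finite F" "card F = n - card X"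
    using infinite_arbitrarily_large[of "S - X"] assms(1,2) by (meson Diff_infinite_finite)
  moreover have "card (X \<union> F) = n"
    using calculation assms(2,4) by (subst card_Un_disjoint) auto
  ultimately show ?thesis
    using that[of "X \<union> F"] assms(2,3) by auto
qed

theorem corollary4:
  fixes n :: nat and a b :: real and f :: "real \<Rightarrow> real" and x :: "nat \<Rightarrow> real"
  assumes "a < b"
    and "m_convex (2 * n) {a..b} f"
    and "x 1 = a"
    and "\<And>i. 2 \<le> i \<Longrightarrow> i \<le> n + 1 \<Longrightarrow> x i \<in> {a<..<b}"
  shows "\<exists>p :: real poly. degree p \<le> 2 * n \<and>
           (\<forall>i\<in>{1..n+1}. poly p (x i) = f (x i)) \<and>
           (\<forall>t\<in>{a..b}. poly p t \<le> f t)"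
proof -
  have "card (x ` {2..n+1}) \<le> n"
    using card_image_le[of "{2..n+1}" x] by simp
  moreover have "x ` {2..n+1} \<subseteq> {a<..<b}"
    using assms(4) by auto
  ultimately obtain Y where Y: "x ` {2..n+1} \<subseteq> Y" "Y \<subseteq> {a<..<b}" "finite Y" "card Y = n"
    using finite_superset_card_eq[of "{a<..<b}"] assms(1) by (metis finite_imageI finite_atLeastAtMost infinite_Ioo)
  then obtain p where p: "degree p \<le> 2 * n" "\<forall>z\<in>insert a Y. poly p z = f z"
    "\<forall>t\<in>{a..b}. poly p t \<le> f t"
    using exists_poly_minorant_interpolating[of Y a b f] assms(2) by auto
  have "x i \<in> insert a Y" if "i \<in> {1..n+1}" for i
  proof (cases "i = 1")
    case False
    with that have "i \<in> {2..n+1}"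
      by auto
    with Y(1) show ?thesis
      by blast
  qed (use assms(3) in simp)
  with p show ?thesis
    by blast
qed

end
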